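(* For every $n\ge 1$, $$\sum_{P\in PF_n}c^{\operatorname{critic}(P)}u^{\operatorname{lucky}(P)}=cu\prod_{i=1}^{n-1}\bigl(i+(n-i)u+cu\bigr).$$
   Context: Parking algorithm: for a sequence $P=(p_1,\dots,p_n)$ of positive integers, cars $1,\dots,n$ park in turn, car $c$ driving to space $p_c$ and taking the first empty space among $p_c,p_c+1,\dots$; let $q_c$ be its space. $PF_n$ is the set of such sequences with all $q_c\le n$ (parking functions of length $n$). A car $c$ is lucky if $q_c=p_c$; $\operatorname{lucky}(P)$ is the number of lucky cars. A car $c$ is critical if at the moment it parks all spaces $q_c+1,\dots,n$ are already occupied; $\operatorname{critic}(P)$ is the number of critical cars. *)

theory Defs
  imports Main
begin

primrec park_spaces :: "nat set \<Rightarrow> nat list \<Rightarrow> nat list" where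
  "park_spaces Occ [] = []"
| "park_spaces Occ (p # ps) =
     (let q = (LEAST s. p \<le> s \<and> s \<notin> Occ) in q # park_spaces (insert q Occ) ps)"

text \<open>spaces P ! i is the space q of car i+1 (cars are 0-indexed in lists).\<close>
definition spaces :: "nat list \<Rightarrow> nat list" where
  "spaces P = park_spaces {} P"

definition PF :: "nat \<Rightarrow> nat list set" where
  "PF n = {P. length P = n \<and> (\<forall>p\<in>set P. 1 \<le> p) \<and> (\<forall>q\<in>set (spaces P). q \<le> n)}"

definition lucky :: "nat list \<Rightarrow> nat" where
  "lucky P = card {i. i < length P \<and> spaces P ! i = P ! i}"

definition critic :: "nat list \<Rightarrow> nat" where
  "critic P = card {i. i < length P \<and>
      {spaces P ! i + 1 .. length P} \<subseteq> set (take i (spaces P))}"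

end

theory Submission
  imports Defs "HOL-Computational_Algebra.Polynomial"
begin

text \<open>Classify the parking functions of length \<open>n\<close> by the space \<open>r\<close> left empty by the first
  \<open>n - 1\<close> cars. The cars preferring a space below \<open>r\<close> form a parking function of length \<open>r - 1\<close>
  without critical cars (space \<open>r\<close> is still free), those preferring a space above \<open>r\<close> form a
  shifted parking function of length \<open>n - r\<close>, and the two groups interleave in
  \<open>(n - 1 choose r - 1)\<close> ways. The last car prefers some \<open>p \<le> r\<close>, parks at \<open>r\<close>, is critical, and
  is lucky iff \<open>p = r\<close>. The resulting recursion
  \<open>F(n; c, u) = c \<Sum>\<^sub>r (u + r - 1) (n - 1 choose r - 1) F(r - 1; 1, u) F(n - r; c, u)\<close> is solved by the
  product formula thanks to an Abel-type convolution identity for the products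
  \<open>\<Prod>\<^sub>i (x + i + (k + 1 - i) u)\<close>. That identity is a difference equation in \<open>x\<close> with step
  \<open>1 - u\<close>; it is proved over \<open>\<int>[u][x]\<close>, where a polynomial in \<open>x\<close> with infinitely many roots
  vanishes, and transferred to any commutative ring by evaluation.\<close>

section \<open>An Abel-type convolution identity\<close>

definition abel_prod :: "'a::comm_ring_1 \<Rightarrow> 'a \<Rightarrow> nat \<Rightarrow> 'a" where
  "abel_prod u x k = (\<Prod>i<k. x + of_nat (Suc i) + of_nat (k - i) * u)"

definition abel_term :: "'a::comm_ring_1 \<Rightarrow> 'a \<Rightarrow> nat \<Rightarrow> 'a" where
  "abel_term u y j = (if j = 0 then 1 else y * abel_prod u y (j - 1))"

definition abel_defect :: "'a::comm_ring_1 \<Rightarrow> 'a \<Rightarrow> nat \<Rightarrow> 'a" where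
  "abel_defect u y m =
     abel_prod u y m - (\<Sum>k\<le>m. of_nat (m choose k) * abel_prod u 0 k * abel_term u y (m - k))"

lemma abel_prod_altdef: "abel_prod u x m = (\<Prod>i=1..m. of_nat i + of_nat (Suc m - i) * u + x)"
  by (simp add: abel_prod_def prod.atLeast1_atMost_eq ac_simps)

lemma abel_prod_Suc:
  "abel_prod u x (Suc m) = abel_prod u (x + u) m * (x + of_nat (Suc m) + u)"
  unfolding abel_prod_def by (auto simp: Suc_diff_le algebra_simps intro!: prod.cong)

lemma abel_prod_Suc':
  "abel_prod u (x - (1 - u)) (Suc m) = (x + of_nat (Suc (Suc m)) * u) * abel_prod u (x + u) m"
  unfolding abel_prod_def prod.lessThan_Suc_shift
  by (auto simp: Suc_diff_le algebra_simps intro!: prod.cong)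

lemma abel_prod_diff:
  "abel_prod u y (Suc m) - abel_prod u (y - (1 - u)) (Suc m) =
     of_nat (Suc m) * (1 - u) * abel_prod u (y + u) m"
  using abel_prod_Suc[of u y m] abel_prod_Suc'[of u y m] by (simp add: algebra_simps)

lemma abel_term_diff:
  "abel_term u y (Suc j) - abel_term u (y - (1 - u)) (Suc j) =
     of_nat (Suc j) * (1 - u) * abel_term u (y + u) j"
proof (cases j)
  case 0
  then show ?thesis by (simp add: abel_term_def abel_prod_def)
next
  case (Suc i)
  have "abel_term u y (Suc j) - abel_term u (y - (1 - u)) (Suc j) =
     abel_prod u (y + u) i * (y * (y + of_nat (Suc i) + u) - (y - (1 - u)) * (y + of_nat (Suc (Suc i)) * u))"
    unfolding abel_term_def Suc using abel_prod_Suc[of u y i] abel_prod_Suc'[of u y i]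
    by (simp add: algebra_simps)
  also have "\<dots> = of_nat (Suc j) * (1 - u) * abel_term u (y + u) j"
    unfolding abel_term_def Suc by (simp add: algebra_simps)
  finally show ?thesis .
qed

lemma abel_term_0: "abel_term u 0 j = (if j = 0 then 1 else 0)"
  by (simp add: abel_term_def)

lemma abel_defect_0: "abel_defect u 0 m = 0"
proof -
  have "(\<Sum>k\<le>m. of_nat (m choose k) * abel_prod u 0 k * abel_term u 0 (m - k)) =
        (\<Sum>k\<in>{m}. of_nat (m choose k) * abel_prod u 0 k * abel_term u 0 (m - k))"
    by (rule sum.mono_neutral_right) (auto simp: abel_term_0)
  then show ?thesis by (simp add: abel_defect_def abel_term_0)
qed

lemma abel_defect_diff:
  "abel_defect u y (Suc m) - abel_defect u (y - (1 - u)) (Suc m) =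
     of_nat (Suc m) * (1 - u) * abel_defect u (y + u) m"
proof -
  let ?a = "1 - u"
  have summand: "of_nat (Suc m choose k) * abel_prod u 0 k *
                (abel_term u y (Suc m - k) - abel_term u (y - ?a) (Suc m - k)) =
              of_nat (Suc m) * ?a * (of_nat (m choose k) * abel_prod u 0 k * abel_term u (y + u) (m - k))"
    if "k \<le> m" for k
  proof -
    have "(Suc m choose k) * Suc (m - k) = Suc m * (m choose k)"
      using binomial_absorb_comp[of "Suc m" k] that by (simp add: Suc_diff_le mult.commute)
    then have binom: "of_nat (Suc m choose k) * (of_nat (Suc (m - k)) * z) =
        of_nat (Suc m) * (of_nat (m choose k) * z)" for z :: 'a
      by (metis mult.assoc of_nat_mult)
    have "Suc m - k = Suc (m - k)"
      using that by simp
    then show ?thesis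
      by (simp only: abel_term_diff mult_ac binom)
  qed
  have "(\<Sum>k\<le>Suc m. of_nat (Suc m choose k) * abel_prod u 0 k * abel_term u y (Suc m - k)) -
        (\<Sum>k\<le>Suc m. of_nat (Suc m choose k) * abel_prod u 0 k * abel_term u (y - ?a) (Suc m - k)) =
        (\<Sum>k\<le>m. of_nat (Suc m choose k) * abel_prod u 0 k *
           (abel_term u y (Suc m - k) - abel_term u (y - ?a) (Suc m - k)))"
    by (simp add: atMost_Suc sum_subtractf right_diff_distrib abel_term_def)
  also have "\<dots> = of_nat (Suc m) * ?a *
      (\<Sum>k\<le>m. of_nat (m choose k) * abel_prod u 0 k * abel_term u (y + u) (m - k))"
    by (simp add: summand sum_distrib_left)
  finally show ?thesis
    unfolding abel_defect_def using abel_prod_diff[of u y m] by (simp add: algebra_simps)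
qed

locale comm_ring_hom =
  fixes h :: "'a::comm_ring_1 \<Rightarrow> 'b::comm_ring_1"
  assumes hom_add: "h (a + b) = h a + h b"
    and hom_mult: "h (a * b) = h a * h b"
    and hom_one: "h 1 = 1"
begin

lemma hom_zero: "h 0 = 0"
  using hom_add[of 0 0] by simp

lemma hom_uminus: "h (- a) = - h a"
  using hom_add[of a "- a"] hom_zero minus_unique[of "h a" "h (- a)"] by simp

lemma hom_diff: "h (a - b) = h a - h b"
  using hom_add[of a "- b"] by (simp add: hom_uminus)

lemma hom_of_nat: "h (of_nat n) = of_nat n"
  by (induction n) (simp_all add: hom_zero hom_one hom_add)

lemma hom_sum: "h (sum f A) = (\<Sum>x\<in>A. h (f x))"
  by (induction A rule: infinite_finite_induct) (simp_all add: hom_zero hom_add)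

lemma hom_prod: "h (prod f A) = (\<Prod>x\<in>A. h (f x))"
  by (induction A rule: infinite_finite_induct) (simp_all add: hom_one hom_mult)

lemma hom_abel_prod: "h (abel_prod u x k) = abel_prod (h u) (h x) k"
  unfolding abel_prod_def hom_prod by (simp only: hom_add hom_mult hom_of_nat)

lemma hom_abel_term: "h (abel_term u x k) = abel_term (h u) (h x) k"
  unfolding abel_term_def by (simp add: hom_abel_prod hom_mult hom_one)

lemma hom_abel_defect: "h (abel_defect u x k) = abel_defect (h u) (h x) k"
  unfolding abel_defect_def
  by (simp add: hom_diff hom_sum hom_abel_prod hom_abel_term hom_mult hom_of_nat hom_zero)

lemma hom_map_poly_add: "map_poly h (p + q) = map_poly h p + map_poly h q"
  by (rule poly_eqI) (simp add: coeff_map_poly hom_add hom_zero)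

lemma hom_map_poly_mult: "map_poly h (p * q) = map_poly h p * map_poly h q"
  by (rule poly_eqI) (simp add: coeff_map_poly coeff_mult hom_mult hom_sum hom_zero)

lemma comm_ring_hom_poly_map_eval: "comm_ring_hom (\<lambda>p. poly (map_poly h p) x)"
  by unfold_locales (simp_all add: hom_map_poly_add hom_map_poly_mult hom_zero hom_one)

end

lemma comm_ring_hom_of_int: "comm_ring_hom of_int"
  by unfold_locales simp_all

lemma comm_ring_hom_poly_eval: "comm_ring_hom (\<lambda>p. poly p x)"
  by unfold_locales simp_all

lemma poly_eq_0_if_vanishes_on_multiples:
  fixes p :: "'a::{idom, ring_char_0} poly"
  assumes "a \<noteq> 0" "\<And>k. poly p (of_nat k * a) = 0"
  shows "p = 0"
proof (rule ccontr)
  assume "p \<noteq> 0"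
  have "inj (\<lambda>k::nat. of_nat k * a)"
    using assms(1) by (intro injI) simp
  then have "infinite (range (\<lambda>k::nat. of_nat k * a))"
    by (rule range_inj_infinite)
  moreover have "range (\<lambda>k::nat. of_nat k * a) \<subseteq> {x. poly p x = 0}"
    using assms(2) by auto
  ultimately have "infinite {x. poly p x = 0}"
    by (rule infinite_super[rotated])
  with \<open>p \<noteq> 0\<close> show False
    using poly_roots_finite by blast
qed

lemma abel_defect_int_poly: "abel_defect [:0, 1:] y m = (0 :: int poly)"
proof (induction m arbitrary: y)
  case 0
  then show ?case by (simp add: abel_defect_def abel_prod_def abel_term_def)
next
  case (Suc m)
  let ?u = "[:0, 1:] :: int poly"
  let ?a = "1 - ?u"
  let ?D = "abel_defect [:?u:] [:0, 1:] (Suc m)"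
  have defect_m: "abel_defect ?u y' m = 0" for y'
    by (rule Suc.IH)
  have eval_D: "poly ?D y = abel_defect ?u y (Suc m)" for y
    using comm_ring_hom.hom_abel_defect[OF comm_ring_hom_poly_eval[of y], of "[:?u:]" "[:0, 1:]"] by simp
  have roots: "poly ?D (of_nat k * ?a) = 0" for k
  proof (induction k)
    case 0
    then show ?case by (simp add: eval_D abel_defect_0)
  next
    case (Suc k)
    have shift: "of_nat (Suc k) * ?a - ?a = of_nat k * ?a"
      by (simp add: algebra_simps)
    have "abel_defect ?u (of_nat (Suc k) * ?a) (Suc m) = abel_defect ?u (of_nat k * ?a) (Suc m)"
      using abel_defect_diff[of ?u "of_nat (Suc k) * ?a" m] unfolding shift defect_m by simp
    then show ?case
      using Suc.IH by (simp only: eval_D)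
  qed
  have "?a \<noteq> 0"
  proof
    assume "?a = 0"
    then have "poly ?a 0 = poly 0 0"
      by (rule arg_cong)
    then show False
      by simp
  qed
  then have "?D = 0"
    using roots by (rule poly_eq_0_if_vanishes_on_multiples)
  then show ?case using eval_D[of y] by simp
qed

lemma abel_defect_eq_0:
  fixes u y :: "'a::comm_ring_1"
  shows "abel_defect u y m = 0"
proof -
  define ev_coeff :: "int poly \<Rightarrow> 'a" where "ev_coeff = (\<lambda>q. poly (map_poly of_int q) u)"
  have hom_coeff: "comm_ring_hom ev_coeff"
    unfolding ev_coeff_def by (rule comm_ring_hom.comm_ring_hom_poly_map_eval[OF comm_ring_hom_of_int])
  define ev :: "int poly poly \<Rightarrow> 'a" where "ev = (\<lambda>p. poly (map_poly ev_coeff p) y)"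
  interpret comm_ring_hom ev
    unfolding ev_def by (rule comm_ring_hom.comm_ring_hom_poly_map_eval[OF hom_coeff])
  have "poly (abel_defect [:[:0, 1:]:] [:0, 1:] m) t = 0" for t :: "int poly"
    using comm_ring_hom.hom_abel_defect[OF comm_ring_hom_poly_eval[of t], of "[:[:0, 1:]:]" "[:0, 1:]" m]
      abel_defect_int_poly[of t m] by simp
  then have "abel_defect [:[:0, 1:]:] [:0, 1:] m = (0 :: int poly poly)"
    using poly_all_0_iff_0 by blast
  then have "ev (abel_defect [:[:0, 1:]:] [:0, 1:] m) = 0"
    by (simp add: hom_zero)
  moreover have "ev [:[:0, 1:]:] = u" "ev [:0, 1:] = y"
    using hom_coeff by (simp_all add: ev_def ev_coeff_def map_poly_pCons comm_ring_hom.hom_zero)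
  ultimately show ?thesis
    by (simp add: hom_abel_defect)
qed

theorem abel_identity:
  "abel_prod u y m = (\<Sum>k\<le>m. of_nat (m choose k) * abel_prod u 0 k * abel_term u y (m - k))"
  using abel_defect_eq_0[of u y m] by (simp add: abel_defect_def)

section \<open>The parking process\<close>

definition first_free :: "nat set \<Rightarrow> nat \<Rightarrow> nat" where
  "first_free Occ p = (LEAST s. p \<le> s \<and> s \<notin> Occ)"

lemma park_spaces_Cons [simp]:
  "park_spaces Occ (p # ps) = first_free Occ p # park_spaces (insert (first_free Occ p) Occ) ps"
  by (simp add: first_free_def Let_def)

declare park_spaces.simps(2) [simp del]

lemma length_park_spaces [simp]: "length (park_spaces Occ ps) = length ps"
  by (induction ps arbitrary: Occ) simp_all

lemma park_spaces_append:
  "park_spaces Occ (xs @ ys) = park_spaces Occ xs @ park_spaces (Occ \<union> set (park_spaces Occ xs)) ys"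
  by (induction xs arbitrary: Occ) simp_all

lemma first_free_exists:
  fixes Occ :: "nat set"
  assumes "finite Occ"
  shows "\<exists>s. p \<le> s \<and> s \<notin> Occ"
proof -
  obtain k where "\<forall>s\<in>Occ. s \<le> k"
    using assms finite_nat_set_iff_bounded_le by blast
  then show ?thesis
    by (intro exI[of _ "max p (Suc k)"]) auto
qed

lemma
  assumes "finite Occ"
  shows first_free_ge: "p \<le> first_free Occ p"
    and first_free_notin: "first_free Occ p \<notin> Occ"
    and less_first_free_in: "p \<le> s \<Longrightarrow> s < first_free Occ p \<Longrightarrow> s \<in> Occ"
proof -
  show "p \<le> first_free Occ p" "first_free Occ p \<notin> Occ"
    using LeastI_ex[OF first_free_exists[OF assms]] unfolding first_free_def by auto
  show "p \<le> s \<Longrightarrow> s < first_free Occ p \<Longrightarrow> s \<in> Occ"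
    unfolding first_free_def using not_less_Least by blast
qed

lemma first_free_le:
  assumes "finite Occ" "p \<le> r" "r \<notin> Occ"
  shows "first_free Occ p \<le> r"
  using less_first_free_in[OF assms(1,2)] assms(3) by (meson not_le)

lemma first_free_eqI:
  assumes "p \<le> q" "q \<notin> Occ" "\<And>s. p \<le> s \<Longrightarrow> s < q \<Longrightarrow> s \<in> Occ"
  shows "first_free Occ p = q"
  unfolding first_free_def
proof (rule Least_equality)
  fix s
  assume "p \<le> s \<and> s \<notin> Occ"
  then show "q \<le> s"
    using assms(3) not_le by blast
qed (use assms in simp)

lemma first_free_cong:
  assumes "\<And>s. p \<le> s \<Longrightarrow> s \<in> Occ1 \<longleftrightarrow> s \<in> Occ2"
  shows "first_free Occ1 p = first_free Occ2 p"
  unfolding first_free_def by (rule arg_cong[where f = Least]) (use assms in auto)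

lemma park_spaces_ge:
  "finite Occ \<Longrightarrow> set ps \<subseteq> {k..} \<Longrightarrow> set (park_spaces Occ ps) \<subseteq> {k..}"
proof (induction ps arbitrary: Occ)
  case (Cons p ps)
  then show ?case
    using first_free_ge[OF Cons.prems(1), of p] Cons.IH[of "insert (first_free Occ p) Occ"] by auto
qed simp

lemma exists_park_space_ge:
  "finite Occ \<Longrightarrow> p \<in> set ps \<Longrightarrow> \<exists>q\<in>set (park_spaces Occ ps). p \<le> q"
proof (induction ps arbitrary: Occ)
  case (Cons a ps)
  then show ?case
    using first_free_ge[OF Cons.prems(1), of a] Cons.IH[of "insert (first_free Occ a) Occ"] by auto
qed simp

lemma distinct_park_spaces:
  "finite Occ \<Longrightarrow> distinct (park_spaces Occ ps) \<and> set (park_spaces Occ ps) \<inter> Occ = {}"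
proof (induction ps arbitrary: Occ)
  case (Cons p ps)
  then show ?case
    using first_free_notin[OF Cons.prems, of p] Cons.IH[of "insert (first_free Occ p) Occ"] by auto
qed simp

lemma notin_park_spaces_imp_notin:
  "finite Occ \<Longrightarrow> r \<notin> Occ \<Longrightarrow> r \<notin> set (park_spaces Occ ps) \<Longrightarrow> r \<notin> set ps"
proof (induction ps arbitrary: Occ)
  case (Cons p ps)
  have "p \<noteq> r"
  proof
    assume "p = r"
    then have "first_free Occ p = r"
      using Cons.prems(2) by (intro first_free_eqI) auto
    then show False
      using Cons.prems(3) by simp
  qed
  then show ?case
    using Cons.IH[of "insert (first_free Occ p) Occ"] Cons.prems by auto
qed simp

definition parks_within :: "nat \<Rightarrow> nat set \<Rightarrow> nat list \<Rightarrow> bool" where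
  "parks_within n Occ ps \<longleftrightarrow> (\<forall>q\<in>set (park_spaces Occ ps). q \<le> n)"

lemma parks_within_Nil [simp]: "parks_within n Occ []"
  by (simp add: parks_within_def)

lemma parks_within_Cons:
  "parks_within n Occ (p # ps) \<longleftrightarrow>
     first_free Occ p \<le> n \<and> parks_within n (insert (first_free Occ p) Occ) ps"
  by (simp add: parks_within_def)

lemma parks_within_append:
  "parks_within n Occ (xs @ ys) \<longleftrightarrow>
     parks_within n Occ xs \<and> parks_within n (Occ \<union> set (park_spaces Occ xs)) ys"
  by (auto simp: parks_within_def park_spaces_append)

lemma length_le_card_if_parks_within:
  assumes "finite Occ" "parks_within n Occ ps" "set ps \<subseteq> {1..}"
  shows "length ps \<le> card ({1..n} - Occ)"
proof -
  have distinct: "distinct (park_spaces Occ ps)" and disjoint: "set (park_spaces Occ ps) \<inter> Occ = {}"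
    using distinct_park_spaces[OF assms(1)] by auto
  have "set (park_spaces Occ ps) \<subseteq> {1..n} - Occ"
    using park_spaces_ge[OF assms(1,3)] assms(2) disjoint by (auto simp: parks_within_def)
  then have "card (set (park_spaces Occ ps)) \<le> card ({1..n} - Occ)"
    by (rule card_mono[rotated]) simp
  then show ?thesis
    using distinct by (simp add: distinct_card)
qed

text \<open>The weight \<open>c\<^bsup>critical\<^esup> u\<^bsup>lucky\<^esup>\<close> of the cars \<open>ps\<close> parking after the spaces \<open>Occ\<close>
  are taken; criticality refers to the spaces \<open>1..n\<close>.\<close>
primrec park_weight :: "nat \<Rightarrow> 'a::comm_ring_1 \<Rightarrow> 'a \<Rightarrow> nat set \<Rightarrow> nat list \<Rightarrow> 'a" where
  "park_weight n c u Occ [] = 1"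
| "park_weight n c u Occ (p # ps) =
     (if first_free Occ p = p then u else 1) * (if {first_free Occ p + 1..n} \<subseteq> Occ then c else 1) *
     park_weight n c u (insert (first_free Occ p) Occ) ps"

definition pf_weight :: "nat \<Rightarrow> 'a::comm_ring_1 \<Rightarrow> 'a \<Rightarrow> nat set \<Rightarrow> nat list \<Rightarrow> 'a" where
  "pf_weight n c u Occ ps = (if parks_within n Occ ps then park_weight n c u Occ ps else 0)"

lemma park_weight_append:
  "park_weight n c u Occ (xs @ ys) =
     park_weight n c u Occ xs * park_weight n c u (Occ \<union> set (park_spaces Occ xs)) ys"
  by (induction xs arbitrary: Occ) (simp_all add: mult.assoc)

lemma card_less_Suc_split:
  "card {i. i < Suc m \<and> Q i} = (if Q 0 then 1 else 0) + card {i. i < m \<and> Q (Suc i)}"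
proof -
  have card_Suc: "card (Suc ` {i. i < m \<and> Q (Suc i)}) = card {i. i < m \<and> Q (Suc i)}"
    by (simp add: card_image)
  show ?thesis
  proof (cases "Q 0")
    case True
    then have "{i. i < Suc m \<and> Q i} = insert 0 (Suc ` {i. i < m \<and> Q (Suc i)})"
      by (auto simp: less_Suc_eq_0_disj)
    then show ?thesis
      using True card_Suc by simp
  next
    case False
    then have "{i. i < Suc m \<and> Q i} = Suc ` {i. i < m \<and> Q (Suc i)}"
      by (auto simp: less_Suc_eq_0_disj)
    then show ?thesis
      using False card_Suc by simp
  qed
qed

lemma park_weight_eq_powers:
  "park_weight n c u Occ ps =
     c ^ card {i. i < length ps \<and> {park_spaces Occ ps ! i + 1..n} \<subseteq> Occ \<union> set (take i (park_spaces Occ ps))} *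
     u ^ card {i. i < length ps \<and> park_spaces Occ ps ! i = ps ! i}"
proof (induction ps arbitrary: Occ)
  case (Cons p ps)
  have "{i. i < length ps \<and>
      {park_spaces Occ (p # ps) ! Suc i + 1..n} \<subseteq> Occ \<union> set (take (Suc i) (park_spaces Occ (p # ps)))} =
    {i. i < length ps \<and> {park_spaces (insert (first_free Occ p) Occ) ps ! i + 1..n} \<subseteq>
      insert (first_free Occ p) Occ \<union> set (take i (park_spaces (insert (first_free Occ p) Occ) ps))}"
    by auto
  then show ?case
    by (simp only: length_Cons card_less_Suc_split) (simp add: Cons.IH power_add)
qed simp

definition words :: "nat set \<Rightarrow> nat \<Rightarrow> nat list set" where
  "words S k = {xs. set xs \<subseteq> S \<and> length xs = k}"

lemma finite_words: "finite S \<Longrightarrow> finite (words S k)"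
  unfolding words_def by (rule finite_lists_length_eq)

lemma words_0 [simp]: "words S 0 = {[]}"
  by (auto simp: words_def)

lemma sum_words_Suc:
  assumes "finite S"
  shows "(\<Sum>xs\<in>words S (Suc k). f xs) = (\<Sum>x\<in>S. \<Sum>xs\<in>words S k. f (x # xs))"
proof -
  have "(\<Sum>xs\<in>words S (Suc k). f xs) = (\<Sum>(xs, x)\<in>words S k \<times> S. f (x # xs))"
    unfolding words_def lists_length_Suc_eq
    by (subst sum.reindex) (auto simp: inj_split_Cons intro!: sum.cong)
  also have "\<dots> = (\<Sum>x\<in>S. \<Sum>xs\<in>words S k. f (x # xs))"
    by (simp add: sum.cartesian_product[symmetric] sum.swap[of _ S])
  finally show ?thesis .
qed

lemma sum_words_snoc:
  "(\<Sum>xs\<in>words S (Suc k). f xs) = (\<Sum>xs\<in>words S k. \<Sum>x\<in>S. f (xs @ [x]))"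
proof -
  have "words S (Suc k) = (\<lambda>(xs, x). xs @ [x]) ` (words S k \<times> S)"
  proof (intro set_eqI iffI)
    fix zs
    assume zs: "zs \<in> words S (Suc k)"
    then have "zs \<noteq> []"
      by (auto simp: words_def)
    with zs have "zs = butlast zs @ [last zs]" "(butlast zs, last zs) \<in> words S k \<times> S"
      by (auto simp: words_def dest: in_set_butlastD)
    then show "zs \<in> (\<lambda>(xs, x). xs @ [x]) ` (words S k \<times> S)"
      by force
  qed (auto simp: words_def)
  moreover have "inj_on (\<lambda>(xs, x). xs @ [x]) (words S k \<times> S)"
    by (rule inj_onI) auto
  ultimately show ?thesis
    by (simp add: sum.reindex sum.cartesian_product case_prod_unfold)
qed

definition park_gf :: "nat \<Rightarrow> 'a::comm_ring_1 \<Rightarrow> 'a \<Rightarrow> 'a" where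
  "park_gf n c u = (\<Sum>P\<in>words {1..n} n. pf_weight n c u {} P)"

lemma PF_eq_words: "PF n = {P \<in> words {1..n} n. parks_within n {} P}"
proof (intro set_eqI iffI)
  fix P
  assume P: "P \<in> PF n"
  have "set P \<subseteq> {1..n}"
  proof
    fix p assume "p \<in> set P"
    then show "p \<in> {1..n}"
      using exists_park_space_ge[of "{}" p P] P by (fastforce simp: PF_def spaces_def)
  qed
  then show "P \<in> {P \<in> words {1..n} n. parks_within n {} P}"
    using P by (simp add: words_def PF_def parks_within_def spaces_def)
qed (auto simp: words_def PF_def parks_within_def spaces_def)

lemma sum_PF_eq_park_gf:
  "(\<Sum>P\<in>PF n. c ^ critic P * u ^ lucky P) = park_gf n c u"
proof -
  have "(\<Sum>P\<in>PF n. c ^ critic P * u ^ lucky P) =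
      (\<Sum>P\<in>{P \<in> words {1..n} n. parks_within n {} P}. park_weight n c u {} P)"
    unfolding PF_eq_words
    by (intro sum.cong refl)
      (simp add: park_weight_eq_powers critic_def lucky_def spaces_def words_def)
  also have "\<dots> = park_gf n c u"
    unfolding park_gf_def pf_weight_def by (rule sum.inter_filter) (simp add: finite_words)
  finally show ?thesis .
qed

lemma sum_choose_Suc_split:
  fixes T :: "nat \<Rightarrow> 'a::comm_ring_1"
  shows "(\<Sum>k\<le>Suc N. of_nat (Suc N choose k) * T k) =
         (\<Sum>k\<le>N. of_nat (N choose k) * T k) + (\<Sum>k\<le>N. of_nat (N choose k) * T (Suc k))"
proof -
  have "(\<Sum>k\<le>Suc N. of_nat (Suc N choose k) * T k) =
      T 0 + (\<Sum>k\<le>N. of_nat (N choose k) * T (Suc k)) + (\<Sum>k\<le>N. of_nat (N choose Suc k) * T (Suc k))"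
    by (subst sum.atMost_Suc_shift) (simp add: sum.distrib algebra_simps)
  moreover have "(\<Sum>k\<le>N. of_nat (N choose k) * T k) = T 0 + (\<Sum>k<N. of_nat (N choose Suc k) * T (Suc k))"
    by (subst sum.atMost_shift) simp
  moreover have "(\<Sum>k\<le>N. of_nat (N choose Suc k) * T (Suc k)) = (\<Sum>k<N. of_nat (N choose Suc k) * T (Suc k))"
    by (simp add: lessThan_Suc_atMost[symmetric] binomial_eq_0)
  ultimately show ?thesis
    by (simp add: algebra_simps)
qed

text \<open>A word over \<open>A \<union> B\<close> is determined by its subwords over \<open>A\<close> and over \<open>B\<close> together with the
  \<open>N choose k\<close> possible positions of its \<open>k\<close> letters from \<open>A\<close>.\<close>
lemma sum_words_shuffle:
  fixes f g :: "nat list \<Rightarrow> 'a::comm_ring_1"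
  assumes A: "finite A" and B: "finite B" and AB: "A \<inter> B = {}"
  shows "(\<Sum>xs\<in>words (A \<union> B) N. f (filter (\<lambda>x. x \<in> A) xs) * g (filter (\<lambda>x. x \<in> B) xs)) =
         (\<Sum>k\<le>N. of_nat (N choose k) * (\<Sum>ys\<in>words A k. f ys) * (\<Sum>zs\<in>words B (N - k). g zs))"
proof (induction N arbitrary: f g)
  case 0
  then show ?case by simp
next
  case (Suc N)
  let ?SA = "\<lambda>f k. \<Sum>ys\<in>words A k. f ys" and ?SB = "\<lambda>g k. \<Sum>zs\<in>words B k. g zs"
  let ?F = "\<lambda>xs. f (filter (\<lambda>x. x \<in> A) xs) * g (filter (\<lambda>x. x \<in> B) xs)"
  have first_in_A: "(\<Sum>x\<in>A. \<Sum>xs\<in>words (A \<union> B) N. ?F (x # xs)) =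
      (\<Sum>k\<le>N. of_nat (N choose k) * (?SA f (Suc k) * ?SB g (Suc N - Suc k)))"
  proof -
    have "(\<Sum>x\<in>A. \<Sum>xs\<in>words (A \<union> B) N. ?F (x # xs)) =
        (\<Sum>x\<in>A. \<Sum>k\<le>N. of_nat (N choose k) * ?SA (\<lambda>ys. f (x # ys)) k * ?SB g (N - k))"
      using AB by (intro sum.cong refl) (auto simp: Suc.IH[symmetric] intro!: sum.cong)
    then show ?thesis
      by (simp add: sum.swap[of _ A] sum_words_Suc[OF A] sum_distrib_left sum_distrib_right mult_ac)
  qed
  have first_in_B: "(\<Sum>x\<in>B. \<Sum>xs\<in>words (A \<union> B) N. ?F (x # xs)) =
      (\<Sum>k\<le>N. of_nat (N choose k) * (?SA f k * ?SB g (Suc N - k)))"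
  proof -
    have "(\<Sum>x\<in>B. \<Sum>xs\<in>words (A \<union> B) N. ?F (x # xs)) =
        (\<Sum>x\<in>B. \<Sum>k\<le>N. of_nat (N choose k) * ?SA f k * ?SB (\<lambda>zs. g (x # zs)) (N - k))"
      using AB by (intro sum.cong refl) (auto simp: Suc.IH[symmetric] intro!: sum.cong)
    also have "\<dots> = (\<Sum>k\<le>N. of_nat (N choose k) * ?SA f k * (\<Sum>x\<in>B. ?SB (\<lambda>zs. g (x # zs)) (N - k)))"
      by (subst sum.swap) (simp only: sum_distrib_left)
    also have "\<dots> = (\<Sum>k\<le>N. of_nat (N choose k) * (?SA f k * ?SB g (Suc (N - k))))"
      by (simp only: sum_words_Suc[OF B, symmetric] mult.assoc)
    finally show ?thesis
      by (simp add: Suc_diff_le)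
  qed
  have "(\<Sum>xs\<in>words (A \<union> B) (Suc N). ?F xs) =
      (\<Sum>x\<in>A. \<Sum>xs\<in>words (A \<union> B) N. ?F (x # xs)) + (\<Sum>x\<in>B. \<Sum>xs\<in>words (A \<union> B) N. ?F (x # xs))"
    using A B AB by (simp add: sum_words_Suc sum.union_disjoint)
  then show ?case
    unfolding first_in_A first_in_B
    using sum_choose_Suc_split[of N "\<lambda>k. ?SA f k * ?SB g (Suc N - k)"] by (simp add: mult.assoc)
qed

section \<open>Decomposition at an empty space\<close>

definition shift_occ :: "nat \<Rightarrow> nat set \<Rightarrow> nat set" where
  "shift_occ r Occ = {..r} \<union> (\<lambda>x. x + r) ` Occ"

lemma insert_shift_occ: "insert (q + r) (shift_occ r Occ) = shift_occ r (insert q Occ)"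
  by (auto simp: shift_occ_def)

lemma first_free_shift_occ:
  assumes "finite Occ" "1 \<le> p"
  shows "first_free (shift_occ r Occ) (p + r) = first_free Occ p + r"
proof (rule first_free_eqI)
  show "first_free Occ p + r \<notin> shift_occ r Occ"
    using first_free_ge[OF assms(1), of p] first_free_notin[OF assms(1), of p] assms(2)
    by (auto simp: shift_occ_def)
next
  fix s
  assume "p + r \<le> s" "s < first_free Occ p + r"
  then have "s - r \<in> Occ" and "s = (s - r) + r"
    using less_first_free_in[OF assms(1), of p "s - r"] by auto
  then show "s \<in> shift_occ r Occ"
    unfolding shift_occ_def by blast
qed (use first_free_ge[OF assms(1)] in simp)

lemma subset_shift_occ_iff:
  assumes "r \<le> n"
  shows "{Suc (q + r)..n} \<subseteq> shift_occ r Occ \<longleftrightarrow> {Suc q..n - r} \<subseteq> Occ"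
proof -
  have shifted: "{Suc (q + r)..n} = (\<lambda>x. x + r) ` {Suc q..n - r}"
    using assms by simp
  have "inj (\<lambda>x::nat. x + r)"
    by (simp add: inj_on_def)
  moreover have "{Suc (q + r)..n} \<subseteq> shift_occ r Occ \<longleftrightarrow>
      (\<lambda>x. x + r) ` {Suc q..n - r} \<subseteq> (\<lambda>x. x + r) ` Occ"
    unfolding shifted shift_occ_def by auto
  ultimately show ?thesis
    by (simp only: inj_image_subset_iff)
qed

lemma parks_within_shift_occ:
  assumes "finite Occ" "set ys \<subseteq> {1..}" "r \<le> n"
  shows "parks_within n (shift_occ r Occ) (map (\<lambda>x. x + r) ys) \<longleftrightarrow> parks_within (n - r) Occ ys"
  using assms(1,2)
proof (induction ys arbitrary: Occ)
  case (Cons p ys)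
  then show ?case
    using assms(3) Cons.IH[of "insert (first_free Occ p) Occ"]
    by (auto simp: parks_within_Cons first_free_shift_occ insert_shift_occ)
qed simp

lemma park_weight_shift_occ:
  assumes "finite Occ" "set ys \<subseteq> {1..}" "r \<le> n"
  shows "park_weight n c u (shift_occ r Occ) (map (\<lambda>x. x + r) ys) = park_weight (n - r) c u Occ ys"
  using assms(1,2)
proof (induction ys arbitrary: Occ)
  case (Cons p ys)
  then show ?case
    using Cons.IH[of "insert (first_free Occ p) Occ"]
    by (simp add: first_free_shift_occ insert_shift_occ subset_shift_occ_iff[OF assms(3)])
qed simp

lemma words_greaterThanAtMost_eq_shift:
  "words {r<..n} k = map (\<lambda>x. x + r) ` words {1..n - r} k"
proof (intro set_eqI iffI)
  fix zs
  assume zs: "zs \<in> words {r<..n} k"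
  then have "zs = map (\<lambda>x. x + r) (map (\<lambda>x. x - r) zs)"
    by (auto simp: words_def subset_iff intro!: map_idI[symmetric])
  moreover have "map (\<lambda>x. x - r) zs \<in> words {1..n - r} k"
    using zs by (force simp: words_def subset_iff)
  ultimately show "zs \<in> map (\<lambda>x. x + r) ` words {1..n - r} k"
    by blast
qed (force simp: words_def)

lemma park_gf_shift:
  assumes "r \<le> n"
  shows "(\<Sum>zs\<in>words {r<..n} (n - r). pf_weight n c u {..r} zs) =
         park_gf (n - r) c u"
  unfolding words_greaterThanAtMost_eq_shift park_gf_def
proof (subst sum.reindex, simp add: inj_on_def, unfold comp_def, rule sum.cong[OF refl])
  fix ys
  assume "ys \<in> words {1..n - r} (n - r)"
  then have "set ys \<subseteq> {1..}"
    by (auto simp: words_def)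
  moreover have "shift_occ r {} = {..r}"
    by (simp add: shift_occ_def)
  ultimately show "pf_weight n c u {..r} (map (\<lambda>x. x + r) ys) = pf_weight (n - r) c u {} ys"
    using parks_within_shift_occ[of "{}" ys r n] park_weight_shift_occ[of "{}" ys r n c u] assms
    by (simp add: pf_weight_def)
qed

lemma first_free_union_below:
  assumes "finite OA" "OB \<subseteq> {r<..}" "r \<notin> OA" "p \<le> r"
  shows "first_free (OA \<union> OB) p = first_free OA p"
proof -
  have "first_free OA p \<le> r"
    using assms(1,4,3) by (rule first_free_le)
  then show ?thesis
    using assms(2) first_free_ge[OF assms(1)] first_free_notin[OF assms(1)] less_first_free_in[OF assms(1)]
    by (intro first_free_eqI) auto
qed

lemma first_free_union_above:
  assumes "OA \<subseteq> {..<r}" "r < p"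
  shows "first_free (OA \<union> OB) p = first_free ({..r} \<union> OB) p"
  using assms by (intro first_free_cong) auto

text \<open>If space \<open>r\<close> stays empty, the cars preferring spaces below \<open>r\<close> and those preferring spaces
  above \<open>r\<close> park independently of each other.\<close>
lemma parks_within_split:
  assumes "1 \<le> r" "r \<le> n" "finite OA" "finite OB" "OA \<subseteq> {..<r}" "OB \<subseteq> {r<..}"
    and "set ps \<subseteq> {1..<r} \<union> {r<..n}"
  shows "parks_within n (OA \<union> OB) ps \<and> r \<notin> set (park_spaces (OA \<union> OB) ps) \<longleftrightarrow>
    parks_within (r - 1) OA (filter (\<lambda>x. x < r) ps) \<and> parks_within n ({..r} \<union> OB) (filter (\<lambda>x. r < x) ps)"
  using assms(3-)
proof (induction ps arbitrary: OA OB)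
  case (Cons p ps)
  show ?case
  proof (cases "p < r")
    case True
    let ?q = "first_free OA p"
    have q: "first_free (OA \<union> OB) p = ?q"
      using Cons.prems True by (intro first_free_union_below) auto
    have "?q \<le> r"
      using Cons.prems(1,3) True by (intro first_free_le) auto
    show ?thesis
    proof (cases "?q = r")
      case True
      moreover have "\<not> r \<le> r - 1"
        using assms(1) by simp
      ultimately show ?thesis
        using q \<open>p < r\<close> by (simp add: parks_within_Cons)
    next
      case False
      with \<open>?q \<le> r\<close> have "?q < r"
        by simp
      then have "parks_within n (insert ?q OA \<union> OB) ps \<and> r \<notin> set (park_spaces (insert ?q OA \<union> OB) ps) \<longleftrightarrow>
          parks_within (r - 1) (insert ?q OA) (filter (\<lambda>x. x < r) ps) \<and>
          parks_within n ({..r} \<union> OB) (filter (\<lambda>x. r < x) ps)"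
        using Cons.prems by (intro Cons.IH) auto
      then show ?thesis
        using \<open>p < r\<close> q \<open>?q < r\<close> assms(2) by (auto simp: parks_within_Cons)
    qed
  next
    case False
    let ?q = "first_free ({..r} \<union> OB) p"
    have "r < p"
      using False Cons.prems(5) by auto
    then have "r < ?q"
      using first_free_ge[of "{..r} \<union> OB" p] Cons.prems(2) by simp
    moreover have "first_free (OA \<union> OB) p = ?q"
      using Cons.prems(3) \<open>r < p\<close> by (rule first_free_union_above)
    ultimately show ?thesis
      using False Cons.prems Cons.IH[of OA "insert ?q OB"]
      by (auto simp: parks_within_Cons insert_commute)
  qed
qed simp

text \<open>The low cars are never critical: space \<open>r\<close> is still empty when they park.\<close>
lemma park_weight_split:
  assumes "finite OA" "finite OB" "OA \<subseteq> {..<r}" "OB \<subseteq> {r<..}" "r \<le> n"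
    and "set ps \<subseteq> {1..<r} \<union> {r<..n}"
    and "r \<notin> set (park_spaces (OA \<union> OB) ps)"
  shows "park_weight n c u (OA \<union> OB) ps =
    park_weight (r - 1) 1 u OA (filter (\<lambda>x. x < r) ps) * park_weight n c u ({..r} \<union> OB) (filter (\<lambda>x. r < x) ps)"
  using assms(1-4,6-)
proof (induction ps arbitrary: OA OB)
  case (Cons p ps)
  show ?case
  proof (cases "p < r")
    case True
    let ?q = "first_free OA p"
    have q: "first_free (OA \<union> OB) p = ?q"
      using Cons.prems True by (intro first_free_union_below) auto
    moreover have "?q \<le> r"
      using Cons.prems(1,3) True by (intro first_free_le) auto
    ultimately have "?q < r"
      using Cons.prems(6) by auto
    then have "\<not> {Suc ?q..n} \<subseteq> OA \<union> OB"
      using Cons.prems(3,4) assms(5) by (auto simp: subset_iff intro!: exI[of _ r])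
    then show ?thesis
      using True q \<open>?q < r\<close> Cons.prems Cons.IH[of "insert ?q OA" OB]
      by (auto simp: mult.assoc insert_commute)
  next
    case False
    let ?q = "first_free ({..r} \<union> OB) p"
    have "r < p"
      using False Cons.prems(5) by auto
    then have "p \<le> ?q"
      using first_free_ge[of "{..r} \<union> OB" p] Cons.prems(2) by simp
    moreover have "first_free (OA \<union> OB) p = ?q"
      using Cons.prems(3) \<open>r < p\<close> by (rule first_free_union_above)
    moreover have "{Suc ?q..n} \<subseteq> OA \<union> OB \<longleftrightarrow> {Suc ?q..n} \<subseteq> {..r} \<union> OB"
      using \<open>p \<le> ?q\<close> \<open>r < p\<close> Cons.prems(3) by auto
    ultimately show ?thesis
      using False Cons.prems Cons.IH[of OA "insert ?q OB"]
      by (auto simp: mult_ac insert_commute)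
  qed
qed simp

lemma sum_words_parks_within_eq_0:
  assumes "finite Occ" "S \<subseteq> {1..}" "card ({1..n} - Occ) < k"
  shows "(\<Sum>ys\<in>words S k. pf_weight n c u Occ ys) = 0"
proof (intro sum.neutral ballI)
  fix ys
  assume "ys \<in> words S k"
  then have "\<not> parks_within n Occ ys"
    using length_le_card_if_parks_within[OF assms(1)] assms(2,3) by (force simp: words_def)
  then show "pf_weight n c u Occ ys = 0"
    by (simp add: pf_weight_def)
qed

lemma sum_avoiding_space_eq_sum_shuffles:
  assumes r: "1 \<le> r" "r \<le> n"
  shows "(\<Sum>xs\<in>words {1..n} (n - 1).
            if parks_within n {} xs \<and> r \<notin> set (park_spaces {} xs) then park_weight n c u {} xs else 0) =
         (\<Sum>xs\<in>words ({1..<r} \<union> {r<..n}) (n - 1).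
            pf_weight (r - 1) 1 u {} (filter (\<lambda>x. x \<in> {1..<r}) xs) *
            pf_weight n c u {..r} (filter (\<lambda>x. x \<in> {r<..n}) xs))"
proof -
  let ?F = "\<lambda>xs. if parks_within n {} xs \<and> r \<notin> set (park_spaces {} xs) then park_weight n c u {} xs else 0"
  have split: "{1..<r} \<union> {r<..n} = {1..n} - {r}"
    using r by auto
  have "(\<Sum>xs\<in>words {1..n} (n - 1). ?F xs) = (\<Sum>xs\<in>words ({1..<r} \<union> {r<..n}) (n - 1). ?F xs)"
  proof (rule sum.mono_neutral_right)
    show "\<forall>xs\<in>words {1..n} (n - 1) - words ({1..<r} \<union> {r<..n}) (n - 1). ?F xs = 0"
      using notin_park_spaces_imp_notin[of "{}" r] by (force simp: split words_def)
  qed (simp add: finite_words, use r in \<open>auto simp: words_def\<close>)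
  also have "\<dots> = (\<Sum>xs\<in>words ({1..<r} \<union> {r<..n}) (n - 1).
      pf_weight (r - 1) 1 u {} (filter (\<lambda>x. x \<in> {1..<r}) xs) *
      pf_weight n c u {..r} (filter (\<lambda>x. x \<in> {r<..n}) xs))"
  proof (rule sum.cong[OF refl])
    fix xs
    assume "xs \<in> words ({1..<r} \<union> {r<..n}) (n - 1)"
    then have xs: "set xs \<subseteq> {1..<r} \<union> {r<..n}"
      by (auto simp: words_def)
    then have "filter (\<lambda>x. x \<in> {1..<r}) xs = filter (\<lambda>x. x < r) xs"
      and "filter (\<lambda>x. x \<in> {r<..n}) xs = filter (\<lambda>x. r < x) xs"
      by (auto intro!: filter_cong)
    then show "?F xs = pf_weight (r - 1) 1 u {} (filter (\<lambda>x. x \<in> {1..<r}) xs) *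
        pf_weight n c u {..r} (filter (\<lambda>x. x \<in> {r<..n}) xs)"
      using parks_within_split[OF r, of "{}" "{}" xs] park_weight_split[of "{}" "{}" r n xs c u] xs r
      by (auto simp: pf_weight_def)
  qed
  finally show ?thesis .
qed

text \<open>By the length bounds only the term in which exactly \<open>r - 1\<close> cars prefer spaces below \<open>r\<close>
  survives.\<close>
lemma sum_choose_pf_weight_eq:
  assumes r: "1 \<le> r" "r \<le> n"
  shows "(\<Sum>k\<le>n - 1. of_nat ((n - 1) choose k) * (\<Sum>ys\<in>words {1..<r} k. pf_weight (r - 1) 1 u {} ys) *
            (\<Sum>zs\<in>words {r<..n} (n - 1 - k). pf_weight n c u {..r} zs)) =
         of_nat ((n - 1) choose (r - 1)) * park_gf (r - 1) 1 u * park_gf (n - r) c u"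
proof -
  let ?L = "\<lambda>k. \<Sum>ys\<in>words {1..<r} k. pf_weight (r - 1) 1 u {} ys"
  let ?H = "\<lambda>k. \<Sum>zs\<in>words {r<..n} k. pf_weight n c u {..r} zs"
  have "?L k = 0" if "r - 1 < k" for k
    using that by (intro sum_words_parks_within_eq_0) auto
  moreover have "?H (n - 1 - k) = 0" if "k < r - 1" for k
  proof -
    have "{1..n} - {..r} = {r<..n}"
      using r by auto
    then have "card ({1..n} - {..r}) < n - 1 - k"
      using that r by simp
    then show ?thesis
      by (intro sum_words_parks_within_eq_0) auto
  qed
  ultimately have "of_nat ((n - 1) choose k) * ?L k * ?H (n - 1 - k) = 0" if "k \<noteq> r - 1" for k
    using that by (cases "k < r - 1") auto
  then have "(\<Sum>k\<le>n - 1. of_nat ((n - 1) choose k) * ?L k * ?H (n - 1 - k)) =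
      of_nat ((n - 1) choose (r - 1)) * ?L (r - 1) * ?H (n - r)"
    using r by (subst sum.mono_neutral_right[where S = "{r - 1}"]) auto
  moreover have "?L (r - 1) = park_gf (r - 1) 1 u"
  proof -
    have "{1..<r} = {1..r - 1}"
      using r by auto
    then show ?thesis
      by (simp only: park_gf_def)
  qed
  moreover have "?H (n - r) = park_gf (n - r) c u"
    using r(2) by (rule park_gf_shift)
  ultimately show ?thesis
    by simp
qed

lemma sum_avoiding_space_eq_product:
  assumes r: "1 \<le> r" "r \<le> n"
  shows "(\<Sum>xs\<in>words {1..n} (n - 1).
            if parks_within n {} xs \<and> r \<notin> set (park_spaces {} xs) then park_weight n c u {} xs else 0) =
         of_nat ((n - 1) choose (r - 1)) * park_gf (r - 1) 1 u * park_gf (n - r) c u"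
  unfolding sum_avoiding_space_eq_sum_shuffles[OF r] sum_choose_pf_weight_eq[OF r, symmetric]
  by (rule sum_words_shuffle) auto

section \<open>The recursion and its solution\<close>

lemma park_spaces_eq_all_but_one:
  assumes "xs \<in> words {1..n} (n - 1)" "parks_within n {} xs" "1 \<le> n"
  obtains r where "r \<in> {1..n}" "set (park_spaces {} xs) = {1..n} - {r}"
proof -
  let ?Q = "set (park_spaces {} xs)"
  have "set xs \<subseteq> {1..}"
    using assms(1) by (auto simp: words_def)
  then have "?Q \<subseteq> {1..}"
    by (intro park_spaces_ge) simp_all
  with assms(2) have "?Q \<subseteq> {1..n}"
    by (auto simp: parks_within_def)
  moreover have "card ?Q = n - 1"
    using distinct_park_spaces[of "{}" xs] assms(1) by (simp add: distinct_card words_def)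
  moreover have "card ?Q \<noteq> card {1..n}"
    using \<open>card ?Q = n - 1\<close> assms(3) by simp
  ultimately obtain r where r: "r \<in> {1..n} - ?Q"
    by (metis Diff_eq_empty_iff all_not_in_conv subset_antisym)
  have "?Q = {1..n} - {r}"
    using r \<open>?Q \<subseteq> {1..n}\<close> \<open>card ?Q = n - 1\<close> by (intro card_subset_eq) auto
  with r that show ?thesis
    by blast
qed

lemma last_car_weight:
  assumes r: "r \<in> {1..n}" and spaces: "set (park_spaces {} xs) = {1..n} - {r}" and "p \<in> {1..n}"
  shows "pf_weight n c u {} (xs @ [p]) =
    (if p \<le> r then (if p = r then u else 1) * c * park_weight n c u {} xs else 0)"
proof -
  have "parks_within n {} xs"
    using spaces by (auto simp: parks_within_def)
  then have within: "parks_within n {} (xs @ [p]) \<longleftrightarrow> first_free ({1..n} - {r}) p \<le> n"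
    using spaces by (simp add: parks_within_append parks_within_Cons)
  have weight: "park_weight n c u {} (xs @ [p]) = park_weight n c u {} xs *
      ((if first_free ({1..n} - {r}) p = p then u else 1) *
       (if {Suc (first_free ({1..n} - {r}) p)..n} \<subseteq> {1..n} - {r} then c else 1))"
    using spaces by (simp add: park_weight_append)
  show ?thesis
  proof (cases "p \<le> r")
    case True
    then have "first_free ({1..n} - {r}) p = r"
      using r assms(3) by (intro first_free_eqI) auto
    then show ?thesis
      using True r within weight by (auto simp: mult_ac pf_weight_def)
  next
    case False
    then have "first_free ({1..n} - {r}) p = Suc n"
      using r assms(3) by (intro first_free_eqI) auto
    then show ?thesis
      using False within by (simp add: pf_weight_def)
  qed
qed

lemma sum_last_car:
  assumes r: "r \<in> {1..n}" and spaces: "set (park_spaces {} xs) = {1..n} - {r}"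
  shows "(\<Sum>p\<in>{1..n}. pf_weight n c u {} (xs @ [p])) =
    c * (u + of_nat (r - 1)) * park_weight n c u {} xs"
proof -
  have "(\<Sum>p\<in>{1..n}. pf_weight n c u {} (xs @ [p])) =
      (\<Sum>p\<in>{1..n}. if p \<le> r then (if p = r then u else 1) * c * park_weight n c u {} xs else 0)"
    by (rule sum.cong[OF refl]) (rule last_car_weight[OF r spaces])
  also have "\<dots> = (\<Sum>p\<in>{1..r}. (if p = r then u else 1) * c * park_weight n c u {} xs)"
    using r by (simp add: sum.inter_filter[symmetric]) (intro sum.cong; auto)
  also have "\<dots> = (\<Sum>p\<in>{1..r}. if p = r then u else 1) * (c * park_weight n c u {} xs)"
    by (simp add: sum_distrib_right mult.assoc)
  also have "(\<Sum>p\<in>{1..r}. if p = r then u else 1) = u + of_nat (r - 1)"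
  proof -
    have "{1..r} = insert r {1..<r}"
      using r by auto
    moreover have "(\<Sum>p\<in>{1..<r}. if p = r then u else 1) = of_nat (r - 1)"
      by (subst sum.cong[OF refl, of _ _ "\<lambda>_. 1"]) auto
    ultimately show ?thesis
      by simp
  qed
  finally show ?thesis
    by (simp add: mult_ac)
qed

theorem park_gf_rec:
  assumes "1 \<le> n"
  shows "park_gf n c u = c * (\<Sum>r\<in>{1..n}. (u + of_nat (r - 1)) * of_nat ((n - 1) choose (r - 1)) *
           park_gf (r - 1) 1 u * park_gf (n - r) c u)"
proof -
  let ?G = "\<lambda>r xs. if parks_within n {} xs \<and> r \<notin> set (park_spaces {} xs) then park_weight n c u {} xs else 0"
  have last_car: "(\<Sum>p\<in>{1..n}. pf_weight n c u {} (xs @ [p])) = (\<Sum>r\<in>{1..n}. c * (u + of_nat (r - 1)) * ?G r xs)"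
    if xs: "xs \<in> words {1..n} (n - 1)" for xs
  proof (cases "parks_within n {} xs")
    case True
    then obtain r0 where r0: "r0 \<in> {1..n}" "set (park_spaces {} xs) = {1..n} - {r0}"
      using park_spaces_eq_all_but_one[OF xs _ assms] by blast
    then have "(\<Sum>r\<in>{1..n}. c * (u + of_nat (r - 1)) * ?G r xs) =
        (\<Sum>r\<in>{1..n}. if r = r0 then c * (u + of_nat (r - 1)) * park_weight n c u {} xs else 0)"
      using True by (intro sum.cong) auto
    then show ?thesis
      using sum_last_car[OF r0] r0 by simp
  qed (simp add: parks_within_append pf_weight_def)
  have "park_gf n c u = (\<Sum>xs\<in>words {1..n} (n - 1). \<Sum>p\<in>{1..n}. pf_weight n c u {} (xs @ [p]))"
    unfolding park_gf_def using assms sum_words_snoc[of "pf_weight n c u {}" "{1..n}" "n - 1"] by simp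
  also have "\<dots> = (\<Sum>xs\<in>words {1..n} (n - 1). \<Sum>r\<in>{1..n}. c * (u + of_nat (r - 1)) * ?G r xs)"
    by (rule sum.cong[OF refl]) (rule last_car)
  also have "\<dots> = (\<Sum>r\<in>{1..n}. c * (u + of_nat (r - 1)) * (\<Sum>xs\<in>words {1..n} (n - 1). ?G r xs))"
    by (subst sum.swap) (simp add: sum_distrib_left)
  also have "\<dots> = (\<Sum>r\<in>{1..n}. c * (u + of_nat (r - 1)) *
      (of_nat ((n - 1) choose (r - 1)) * park_gf (r - 1) 1 u * park_gf (n - r) c u))"
  proof (rule sum.cong[OF refl])
    fix r
    assume "r \<in> {1..n}"
    then show "c * (u + of_nat (r - 1)) * (\<Sum>xs\<in>words {1..n} (n - 1). ?G r xs) =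
        c * (u + of_nat (r - 1)) * (of_nat ((n - 1) choose (r - 1)) * park_gf (r - 1) 1 u * park_gf (n - r) c u)"
      using sum_avoiding_space_eq_product[of r n c u] by simp
  qed
  finally show ?thesis
    by (simp add: sum_distrib_left mult_ac)
qed

lemma abel_term_self:
  "(u + of_nat k) * abel_term u u k = u * abel_prod u 0 k"
proof (cases k)
  case 0
  then show ?thesis
    by (simp add: abel_term_def abel_prod_def)
next
  case (Suc m)
  then show ?thesis
    using abel_prod_Suc[of u 0 m] by (simp add: abel_term_def algebra_simps)
qed

theorem park_gf_eq_abel_term: "park_gf n c u = abel_term u (c * u) n"
proof (induction n arbitrary: c rule: less_induct)
  case (less n)
  show ?case
  proof (cases "n = 0")
    case True
    then show ?thesis
      by (simp add: park_gf_def pf_weight_def abel_term_def)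
  next
    case False
    then have "park_gf n c u = c * (\<Sum>k<n. (u + of_nat k) * of_nat ((n - 1) choose k) *
        abel_term u u k * abel_term u (c * u) (n - 1 - k))"
      using less.IH by (simp add: park_gf_rec sum.atLeast1_atMost_eq)
    also have "\<dots> = c * u * (\<Sum>k\<le>n - 1. of_nat ((n - 1) choose k) * abel_prod u 0 k * abel_term u (c * u) (n - 1 - k))"
    proof -
      have "(u + of_nat k) * x * abel_term u u k * y = u * (x * abel_prod u 0 k * y)" for k x y
      proof -
        have "(u + of_nat k) * x * abel_term u u k * y = ((u + of_nat k) * abel_term u u k) * (x * y)"
          by (simp only: mult_ac)
        also have "\<dots> = u * (x * abel_prod u 0 k * y)"
          by (subst abel_term_self) (simp only: mult_ac)
        finally show ?thesis .
      qed
      moreover have "{..<n} = {..n - 1}"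
        using False by auto
      ultimately show ?thesis
        by (simp add: sum_distrib_left mult.assoc)
    qed
    also have "\<dots> = c * u * abel_prod u (c * u) (n - 1)"
      by (simp only: abel_identity[symmetric])
    also have "\<dots> = abel_term u (c * u) n"
      using False by (simp add: abel_term_def)
    finally show ?thesis .
  qed
qed

theorem corollary5p5:
  fixes c u :: "'a :: comm_ring_1" and n :: nat
  assumes "n \<ge> 1"
  shows "(\<Sum>P\<in>PF n. c ^ critic P * u ^ lucky P)
         = c * u * (\<Prod>i=1..n-1. of_nat i + of_nat (n - i) * u + c * u)"
proof -
  have "(\<Sum>P\<in>PF n. c ^ critic P * u ^ lucky P) = abel_term u (c * u) n"
    by (simp add: sum_PF_eq_park_gf park_gf_eq_abel_term)
  also have "\<dots> = c * u * abel_prod u (c * u) (n - 1)"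
    using assms by (simp add: abel_term_def)
  also have "\<dots> = c * u * (\<Prod>i=1..n-1. of_nat i + of_nat (n - i) * u + c * u)"
    using assms by (simp add: abel_prod_altdef)
  finally show ?thesis .
qed

end
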